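(* Let ${\bf A},{\bf A}^\dagger$ be linear operators acting on real functions on a set $\Omega$ (on a common invariant domain) with $[{\bf A},{\bf A}^\dagger]=I$. Let $D:\Omega\times\mathbb N\to\mathbb R$ be functions such that $({\bf A}^\dagger_l)^nD(x,0)=D(x,n)$ for all $n\in\mathbb N$, $x\in\Omega$, and ${\bf A}_lD(x,0)=0$. Then ${\bf A}\rightarrow^Da$ and ${\bf A}^\dagger\rightarrow^Da^\dagger$. Consequently, for any polynomials $\alpha_n$, $0\le n\le m$, $\sum_{n=0}^m\alpha_n({\bf A}^\dagger){\bf A}^n\rightarrow^D\sum_{n=0}^m a^n\alpha_n(a^\dagger)$.
   Context: $\mathbb N=\{0,1,2,\dots\}$. On functions $f:\mathbb N\to\mathbb R$: $af(n)=nf(n-1)$, $a^\dagger f(n)=f(n+1)$. $[X,Y]=XY-YX$ and $I$ is the identity. Left/right actions: $(K_lD)(x,n)=(KD(\cdot,n))(x)$, $(\widehat K_rD)(x,n)=(\widehat KD(x,\cdot))(n)$; $K\rightarrow^D\widehat K$ means $K_lD=\widehat K_rD$. *)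

theory Defs
  imports Main "HOL-Computational_Algebra.Polynomial"
begin

definition a_op :: "(nat \<Rightarrow> real) \<Rightarrow> nat \<Rightarrow> real" where
  "a_op f n = real n * f (n - 1)"

definition adag_op :: "(nat \<Rightarrow> real) \<Rightarrow> nat \<Rightarrow> real" where
  "adag_op f n = f (Suc n)"

definition left_act :: "(('a \<Rightarrow> real) \<Rightarrow> ('a \<Rightarrow> real)) \<Rightarrow> ('a \<Rightarrow> nat \<Rightarrow> real) \<Rightarrow> 'a \<Rightarrow> nat \<Rightarrow> real" where
  "left_act K D = (\<lambda>x n. K (\<lambda>y. D y n) x)"

definition right_act :: "((nat \<Rightarrow> real) \<Rightarrow> (nat \<Rightarrow> real)) \<Rightarrow> ('a \<Rightarrow> nat \<Rightarrow> real) \<Rightarrow> 'a \<Rightarrow> nat \<Rightarrow> real" where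
  "right_act K D = (\<lambda>x n. K (\<lambda>m. D x m) n)"

definition intertwines :: "(('a \<Rightarrow> real) \<Rightarrow> ('a \<Rightarrow> real)) \<Rightarrow> ('a \<Rightarrow> nat \<Rightarrow> real) \<Rightarrow> ((nat \<Rightarrow> real) \<Rightarrow> (nat \<Rightarrow> real)) \<Rightarrow> bool" where
  "intertwines K D Khat \<longleftrightarrow> left_act K D = right_act Khat D"

definition poly_op :: "real poly \<Rightarrow> (('b \<Rightarrow> real) \<Rightarrow> ('b \<Rightarrow> real)) \<Rightarrow> ('b \<Rightarrow> real) \<Rightarrow> 'b \<Rightarrow> real" where
  "poly_op p K f = (\<lambda>x. \<Sum>j\<le>degree p. coeff p j * (K ^^ j) f x)"

definition fun_subspace :: "('a \<Rightarrow> real) set \<Rightarrow> bool" where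
  "fun_subspace V \<longleftrightarrow> (\<lambda>x. 0) \<in> V \<and> (\<forall>f\<in>V. \<forall>g\<in>V. (\<lambda>x. f x + g x) \<in> V)
     \<and> (\<forall>c f. f \<in> V \<longrightarrow> (\<lambda>x. c * f x) \<in> V)"

definition linear_on :: "('a \<Rightarrow> real) set \<Rightarrow> (('a \<Rightarrow> real) \<Rightarrow> ('a \<Rightarrow> real)) \<Rightarrow> bool" where
  "linear_on V K \<longleftrightarrow> (\<forall>f\<in>V. \<forall>g\<in>V. K (\<lambda>x. f x + g x) = (\<lambda>x. K f x + K g x))
     \<and> (\<forall>c. \<forall>f\<in>V. K (\<lambda>x. c * f x) = (\<lambda>x. c * K f x))"

end

theory Submission
  imports Defs
begin

text \<open>The ladder relation \<open>A D(\<cdot>,n) = n D(\<cdot>,n-1)\<close> follows by induction on \<open>n\<close> from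
  \<open>A A\<^sup>\<dagger> = A\<^sup>\<dagger> A + I\<close> and the vacuum condition \<open>A D(\<cdot>,0) = 0\<close>; together with
  \<open>A\<^sup>\<dagger> D(\<cdot>,n) = D(\<cdot>,n+1)\<close> this is exactly \<open>A \<rightarrow>\<^sup>D a\<close> and \<open>A\<^sup>\<dagger> \<rightarrow>\<^sup>D a\<^sup>\<dagger>\<close>.
  Iterating gives \<open>A\<^sup>k D(\<cdot>,n) = n(n-1)\<cdots>(n-k+1) D(\<cdot>,n-k)\<close> and \<open>(A\<^sup>\<dagger>)\<^sup>j D(\<cdot>,n) = D(\<cdot>,n+j)\<close>,
  and the same formulas hold for \<open>a\<^sup>k\<close> and \<open>(a\<^sup>\<dagger>)\<^sup>j\<close> acting on sequences, so both sides of
  the normally ordered identity reduce to the same finite sum.\<close>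

lemma intertwinesI:
  assumes "\<And>x n. K (\<lambda>y. D y n) x = Khat (D x) n"
  shows "intertwines K D Khat"
  using assms by (auto simp: intertwines_def left_act_def right_act_def fun_eq_iff)

lemma funpow_closed:
  assumes "\<forall>f\<in>V. K f \<in> V" "f \<in> V"
  shows "(K ^^ j) f \<in> V"
  by (induction j) (use assms in auto)

lemma funpow_scale:
  assumes inv: "\<forall>f\<in>V. K f \<in> V" and lin: "linear_on V K" and f: "f \<in> V"
  shows "(K ^^ j) (\<lambda>x. c * f x) = (\<lambda>x. c * (K ^^ j) f x)"
proof (induction j)
  case (Suc j)
  have "(K ^^ j) f \<in> V" using inv f by (rule funpow_closed)
  with lin Suc show ?case by (simp add: linear_on_def)
qed simp

lemma a_op_funpow: "(a_op ^^ k) g n = (\<Prod>i<k. real (n - i)) * g (n - k)"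
  by (induction k arbitrary: g) (simp_all add: a_op_def funpow_Suc_right del: funpow.simps)

lemma adag_op_funpow: "(adag_op ^^ j) g n = g (n + j)"
  by (induction j arbitrary: n) (simp_all add: adag_op_def)

locale vacuum_ladder =
  fixes A Ad :: "('a \<Rightarrow> real) \<Rightarrow> ('a \<Rightarrow> real)"
    and V :: "('a \<Rightarrow> real) set"
    and D :: "'a \<Rightarrow> nat \<Rightarrow> real"
  assumes Ad_inv: "\<forall>f\<in>V. Ad f \<in> V"
    and A_lin: "linear_on V A" and Ad_lin: "linear_on V Ad"
    and comm: "\<forall>f\<in>V. \<forall>x. A (Ad f) x - Ad (A f) x = f x"
    and D0: "(\<lambda>x. D x 0) \<in> V"
    and Dn: "\<forall>n x. (Ad ^^ n) (\<lambda>y. D y 0) x = D x n"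
    and vac: "\<forall>x. A (\<lambda>y. D y 0) x = 0"
begin

lemma Ad_funpow_vacuum: "(Ad ^^ n) (\<lambda>y. D y 0) = (\<lambda>y. D y n)"
  using Dn by auto

lemma D_in_V: "(\<lambda>y. D y n) \<in> V"
  using funpow_closed[OF Ad_inv D0, of n] by (simp add: Ad_funpow_vacuum)

lemma Ad_D: "Ad (\<lambda>y. D y n) = (\<lambda>y. D y (Suc n))"
  using Ad_funpow_vacuum[of "Suc n"] by (simp add: Ad_funpow_vacuum)

lemma Ad_funpow_D: "(Ad ^^ j) (\<lambda>y. D y n) = (\<lambda>y. D y (n + j))"
  by (induction j) (simp_all add: Ad_D)

lemma A_D: "A (\<lambda>y. D y n) = (\<lambda>x. real n * D x (n - 1))"
proof (induction n)
  case 0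
  then show ?case using vac by (simp add: fun_eq_iff)
next
  case (Suc n)
  have "Ad (A (\<lambda>y. D y n)) = (\<lambda>x. real n * D x (Suc (n - 1)))"
    using Suc Ad_lin D_in_V by (simp add: linear_on_def Ad_D)
  also have "\<dots> = (\<lambda>x. real n * D x n)"
    by (cases n) simp_all
  finally have lowered: "Ad (A (\<lambda>y. D y n)) = (\<lambda>x. real n * D x n)" .
  have "A (\<lambda>y. D y (Suc n)) = A (Ad (\<lambda>y. D y n))"
    by (simp add: Ad_D)
  also have "\<dots> = (\<lambda>x. Ad (A (\<lambda>y. D y n)) x + D x n)"
    using comm D_in_V by (auto simp: algebra_simps)
  finally show ?case
    by (simp add: lowered algebra_simps)
qed

lemma A_funpow_D: "(A ^^ k) (\<lambda>y. D y n) = (\<lambda>x. (\<Prod>i<k. real (n - i)) * D x (n - k))"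
proof (induction k)
  case (Suc k)
  have "(A ^^ Suc k) (\<lambda>y. D y n) = A (\<lambda>x. (\<Prod>i<k. real (n - i)) * D x (n - k))"
    by (simp add: Suc.IH)
  also have "\<dots> = (\<lambda>x. (\<Prod>i<k. real (n - i)) * A (\<lambda>y. D y (n - k)) x)"
    using A_lin D_in_V by (simp add: linear_on_def)
  finally show ?case
    by (simp add: A_D mult.assoc)
qed simp

lemma intertwines_A: "intertwines A D a_op"
  by (rule intertwinesI) (simp add: A_D a_op_def)

lemma intertwines_Ad: "intertwines Ad D adag_op"
  by (rule intertwinesI) (simp add: Ad_D adag_op_def)

lemma poly_Ad_funpow_A_D:
  "poly_op p Ad ((A ^^ k) (\<lambda>y. D y n)) x = (a_op ^^ k) (poly_op p adag_op (D x)) n"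
proof -
  have "poly_op p Ad ((A ^^ k) (\<lambda>y. D y n)) x
      = (\<Sum>j\<le>degree p. coeff p j * ((\<Prod>i<k. real (n - i)) * D x (n - k + j)))"
    unfolding poly_op_def A_funpow_D funpow_scale[OF Ad_inv Ad_lin D_in_V] Ad_funpow_D
    by simp
  also have "\<dots> = (\<Prod>i<k. real (n - i)) * (\<Sum>j\<le>degree p. coeff p j * D x (n - k + j))"
    by (simp add: sum_distrib_left algebra_simps)
  also have "\<dots> = (a_op ^^ k) (poly_op p adag_op (D x)) n"
    by (simp add: a_op_funpow poly_op_def adag_op_funpow)
  finally show ?thesis .
qed

lemma intertwines_normal_ordered:
  "intertwines (\<lambda>f x. \<Sum>n\<le>m. poly_op (\<alpha> n) Ad ((A ^^ n) f) x) D
               (\<lambda>g k. \<Sum>n\<le>m. (a_op ^^ n) (poly_op (\<alpha> n) adag_op g) k)"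
  by (rule intertwinesI) (simp only: poly_Ad_funpow_A_D)

end

theorem proposition3p1:
  fixes A Ad :: "('a \<Rightarrow> real) \<Rightarrow> ('a \<Rightarrow> real)"
    and V :: "('a \<Rightarrow> real) set"
    and D :: "'a \<Rightarrow> nat \<Rightarrow> real"
  assumes V: "fun_subspace V"
    and A_inv: "\<forall>f\<in>V. A f \<in> V" and Ad_inv: "\<forall>f\<in>V. Ad f \<in> V"
    and A_lin: "linear_on V A" and Ad_lin: "linear_on V Ad"
    and comm: "\<forall>f\<in>V. \<forall>x. A (Ad f) x - Ad (A f) x = f x"
    and D0: "(\<lambda>x. D x 0) \<in> V"
    and Dn: "\<forall>n x. (Ad ^^ n) (\<lambda>y. D y 0) x = D x n"
    and vac: "\<forall>x. A (\<lambda>y. D y 0) x = 0"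
  shows "intertwines A D a_op \<and> intertwines Ad D adag_op \<and>
    (\<forall>(\<alpha> :: nat \<Rightarrow> real poly) m.
       intertwines (\<lambda>f x. \<Sum>n\<le>m. poly_op (\<alpha> n) Ad ((A ^^ n) f) x) D
                   (\<lambda>g k. \<Sum>n\<le>m. (a_op ^^ n) (poly_op (\<alpha> n) adag_op g) k))"
proof -
  interpret vacuum_ladder A Ad V D
    using Ad_inv A_lin Ad_lin comm D0 Dn vac by unfold_locales
  show ?thesis
    using intertwines_A intertwines_Ad intertwines_normal_ordered by blast
qed

end
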